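(* Let $n=2p$ with $p$ a positive integer, $a,b\in\mathbb{C}$, $b\ne0$, and let $A^{\dagger}$ be the $n\times n$ tridiagonal matrix with diagonal entries $a$ and $A^{\dagger}_{k,k+1}=A^{\dagger}_{k+1,k}=(-1)^{k+1}b$ for $k=1,\dots,n-1$. Let $\lambda_k^{\dagger}=a-2b\cos\left(\frac{k\pi}{n+1}\right)$, $\psi_k=\frac{\lambda_k^{\dagger}-a}{b}$ and $\eta_k=\frac{4-\psi_k^2}{2n+2}$ for $k=1,\dots,n$. Let $s$ be a nonnegative integer, or any integer if $A^{\dagger}$ is invertible. Then the entries $l_{ij}(s)$ of $(A^{\dagger})^s$ are $$l_{ij}(s)=\sum_{k=1}^{n}(\lambda_k^{\dagger})^{s}\eta_k\,r_{i-1}r_{j-1}\,U_{i-1}\left(\tfrac{\psi_k}{2}\right)U_{j-1}\left(\tfrac{\psi_k}{2}\right),\quad i,j=1,\dots,n.$$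
   Context: $U_m$ is the Chebyshev polynomial of the second kind: $U_0=1$, $U_1=2x$, $U_{m+1}=2xU_m-U_{m-1}$. For an integer $m\ge0$, $r_m=1$ if $m\equiv0,1\pmod4$ and $r_m=-1$ if $m\equiv2,3\pmod4$. *)

theory Defs
  imports Complex_Main "Jordan_Normal_Form.Matrix"
begin

fun chebU :: "nat \<Rightarrow> complex \<Rightarrow> complex" where
  "chebU 0 x = 1"
| "chebU (Suc 0) x = 2 * x"
| "chebU (Suc (Suc m)) x = 2 * x * chebU (Suc m) x - chebU m x"

definition rsign :: "nat \<Rightarrow> complex" where
  "rsign m = (if m mod 4 = 0 \<or> m mod 4 = 1 then 1 else -1)"

text \<open>The tridiagonal matrix A-dagger; JNF indices are 0-based, so the 1-based
  superdiagonal entry (k,k+1), k = i+1, equals (-1)^(k+1) b = (-1)^(i+2) b.\<close>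
definition Adag :: "nat \<Rightarrow> complex \<Rightarrow> complex \<Rightarrow> complex mat" where
  "Adag n a b = mat n n (\<lambda>(i,j).
     if i = j then a
     else if j = i + 1 then (-1) ^ (i + 2) * b
     else if i = j + 1 then (-1) ^ (j + 2) * b
     else 0)"

text \<open>Two-sided matrix inverse (meaningful when the matrix is invertible).\<close>
definition inv_mat :: "complex mat \<Rightarrow> complex mat" where
  "inv_mat A = (SOME B. inverts_mat A B \<and> inverts_mat B A)"

definition mat_pow_int :: "complex mat \<Rightarrow> int \<Rightarrow> complex mat" where
  "mat_pow_int A s = (if 0 \<le> s then A ^\<^sub>m nat s else (inv_mat A) ^\<^sub>m nat (- s))"

definition lam_dag :: "nat \<Rightarrow> complex \<Rightarrow> complex \<Rightarrow> nat \<Rightarrow> complex" where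
  "lam_dag n a b k = a - 2 * b * complex_of_real (cos (real k * pi / real (n + 1)))"

definition psi :: "nat \<Rightarrow> complex \<Rightarrow> complex \<Rightarrow> nat \<Rightarrow> complex" where
  "psi n a b k = (lam_dag n a b k - a) / b"

definition eta :: "nat \<Rightarrow> complex \<Rightarrow> complex \<Rightarrow> nat \<Rightarrow> complex" where
  "eta n a b k = (4 - (psi n a b k)^2) / (2 * of_nat n + 2)"

end

theory Submission
  imports Defs
begin

text \<open>
  With \<open>\<theta>\<^sub>k = k\<pi>/(n+1)\<close> we have \<open>\<psi>\<^sub>k = -2 cos \<theta>\<^sub>k\<close>, and the vectors
  \<open>v\<^sub>k(i) = r\<^sub>i U\<^sub>i(\<psi>\<^sub>k/2)\<close> are eigenvectors of \<open>A\<^sup>\<dagger>\<close> for \<open>\<lambda>\<^sub>k\<^sup>\<dagger>\<close>: the signs \<open>r\<^sub>i\<close> absorb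
  the alternating signs of the off-diagonal, so each row is the three-term recurrence of \<open>U\<close>,
  and the last row holds because \<open>U\<^sub>n(cos \<theta>\<^sub>k) = 0\<close>. Since \<open>U\<^sub>i(cos \<theta>) sin \<theta> = sin((i+1)\<theta>)\<close>,
  discrete sine orthogonality makes these eigenvectors orthonormal for the weights \<open>\<eta>\<^sub>k\<close>.
  Hence \<open>S(s) = \<Sum>\<^sub>k \<lambda>\<^sub>k\<^sup>s \<eta>\<^sub>k v\<^sub>k v\<^sub>k\<^sup>T\<close> satisfies \<open>S(0) = I\<close> and \<open>S(s) A\<^sup>\<dagger> = S(s+1)\<close>, which
  determines all powers of \<open>A\<^sup>\<dagger>\<close>, negative ones included when \<open>A\<^sup>\<dagger>\<close> is invertible
  (then no \<open>\<lambda>\<^sub>k\<^sup>\<dagger>\<close> vanishes, being an eigenvalue).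
\<close>

section \<open>Sums of sines and cosines at equidistant angles\<close>

lemma sin_half_mult_sum_cos:
  "2 * sin (x / 2) * (\<Sum>k = 1..m. cos (real k * x)) = sin ((real m + 1 / 2) * x) - sin (x / 2)"
proof (induction m)
  case (Suc m)
  have "sin ((real m + 3 / 2) * x) - sin ((real m + 1 / 2) * x) = 2 * sin (x / 2) * cos (real (Suc m) * x)"
    by (subst sin_diff_sin) (simp add: algebra_simps add_divide_distrib)
  with Suc show ?case by (simp add: algebra_simps)
qed simp

lemma sum_cos_equidistant:
  assumes "0 < m" "m < 2 * (n + 1)"
  shows "(\<Sum>k = 1..n. cos (real m * (real k * pi / real (n + 1)))) = (if even m then -1 else 0)"
proof -
  define x where "x = real m * pi / real (n + 1)"
  have "real m * pi < 2 * (real n + 1) * pi"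
    using assms(2) by (intro mult_strict_right_mono) (simp_all flip: of_nat_less_iff)
  then have "0 < x / 2" "x / 2 < pi"
    using assms(1) by (auto simp: x_def field_simps)
  then have sin_pos: "sin (x / 2) > 0"
    by (rule sin_gt_zero)
  have "(real n + 1 / 2) * x = real m * pi - x / 2"
    by (simp add: x_def field_simps)
  then have "sin ((real n + 1 / 2) * x) = - ((-1) ^ m) * sin (x / 2)"
    by (simp add: sin_diff)
  with sin_half_mult_sum_cos[of x n]
  have "sin (x / 2) * (2 * (\<Sum>k = 1..n. cos (real k * x)) + 1 + (-1) ^ m) = 0"
    by (simp add: algebra_simps)
  with sin_pos have "(\<Sum>k = 1..n. cos (real k * x)) = - (1 + (-1) ^ m) / 2"
    by simp
  moreover have "real m * (real k * pi / real (n + 1)) = real k * x" for k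
    by (simp add: x_def)
  ultimately show ?thesis
    by (cases "even m") simp_all
qed

lemma sum_sin_mult_sin_equidistant:
  assumes "a \<in> {1..n}" "b \<in> {1..n}"
  shows "(\<Sum>k = 1..n. sin (real a * (real k * pi / real (n + 1))) * sin (real b * (real k * pi / real (n + 1))))
     = (if a = b then (real n + 1) / 2 else 0)"
proof -
  define t where "t k = real k * pi / real (n + 1)" for k :: nat
  define d where "d = (if a \<le> b then b - a else a - b)"
  have cos_diff: "cos (real a * t k - real b * t k) = cos (real d * t k)" for k
  proof -
    have "\<bar>real a - real b\<bar> = real d" "\<bar>t k\<bar> = t k"
      by (auto simp: d_def t_def of_nat_diff)
    then have "real d * t k = \<bar>real a * t k - real b * t k\<bar>"
      by (simp add: abs_mult flip: left_diff_distrib)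
    then show ?thesis
      by simp
  qed
  have parity: "even d \<longleftrightarrow> even (a + b)"
    by (auto simp: d_def)
  have "(\<Sum>k = 1..n. sin (real a * t k) * sin (real b * t k)) =
     ((\<Sum>k = 1..n. cos (real d * t k)) - (\<Sum>k = 1..n. cos (real (a + b) * t k))) / 2"
    by (simp add: sin_times_sin cos_diff distrib_right flip: sum_subtractf sum_divide_distrib)
  also have "(\<Sum>k = 1..n. cos (real (a + b) * t k)) = (if even (a + b) then -1 else 0)"
    using assms unfolding t_def by (intro sum_cos_equidistant) auto
  also have "(\<Sum>k = 1..n. cos (real d * t k)) = (if a = b then real n else if even (a + b) then -1 else 0)"
  proof (cases "a = b")
    case False
    then have "0 < d" "d < 2 * (n + 1)"
      using assms by (auto simp: d_def)
    then show ?thesis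
      using False parity sum_cos_equidistant[of d n] unfolding t_def by simp
  qed (simp add: d_def)
  finally show ?thesis
    unfolding t_def by (cases "a = b") auto
qed

section \<open>Chebyshev polynomials and the signs \<open>r\<^sub>m\<close>\<close>

lemma chebU_cos_mult_sin:
  "chebU m (complex_of_real (cos t)) * complex_of_real (sin t) = complex_of_real (sin (real (Suc m) * t))"
proof (induction m rule: induct_nat_012)
  case (ge2 m)
  let ?c = "complex_of_real (cos t)" and ?s = "complex_of_real (sin t)"
  have "chebU (Suc (Suc m)) ?c * ?s = 2 * ?c * (chebU (Suc m) ?c * ?s) - chebU m ?c * ?s"
    by (simp add: algebra_simps)
  also have "\<dots> = complex_of_real (2 * cos t * sin (real (Suc (Suc m)) * t) - sin (real (Suc m) * t))"
    using ge2 by simp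
  also have "2 * cos t * sin (real (Suc (Suc m)) * t) - sin (real (Suc m) * t) = sin (real (Suc (Suc (Suc m))) * t)"
    using sin_add[of "real (Suc (Suc m)) * t" t] sin_diff[of "real (Suc (Suc m)) * t" t]
    by (simp add: algebra_simps)
  finally show ?case .
qed (simp_all add: sin_double)

lemma chebU_uminus: "chebU m (- x) = (-1) ^ m * chebU m x"
  by (induction m x rule: chebU.induct) (simp_all add: algebra_simps)

lemma rsign_Suc: "rsign (Suc i) = (-1) ^ i * rsign i"
proof -
  have "(-1 :: complex) ^ i = (-1) ^ (i mod 4)"
    by (metis minus_one_power_iff even_mod_4_div_2 mod_mod_cancel dvd_mod_iff dvd_refl even_numeral)
  moreover have "i mod 4 \<in> {0, 1, 2, 3}" "Suc i mod 4 = (if i mod 4 = 3 then 0 else Suc (i mod 4))"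
    by (auto simp: mod_Suc)
  ultimately show ?thesis
    unfolding rsign_def by auto
qed

lemma rsign_mult_self: "rsign i * rsign i = 1"
  by (simp add: rsign_def)

lemma rsign_chebU_recurrence:
  fixes x :: complex
  defines "w \<equiv> \<lambda>l. rsign l * chebU l x"
  shows "(-1) ^ i * w (Suc i) + (if i = 0 then 0 else (-1) ^ (i - 1) * w (i - 1)) = 2 * x * w i"
proof (cases i)
  case 0
  then show ?thesis by (simp add: w_def rsign_def)
next
  case (Suc m)
  have "(-1 :: complex) ^ k * ((-1) ^ k * z) = z" for k z
    by (simp flip: power_add mult.assoc)
  then show ?thesis
    using Suc by (simp add: w_def rsign_Suc algebra_simps)
qed

section \<open>Matrix powers determined by a shift relation\<close>

lemma pow_mat_eq_of_mult_shift:
  fixes A :: "'a :: semiring_1 mat" and M :: "int \<Rightarrow> 'a mat"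
  assumes "A \<in> carrier_mat n n" "M 0 = 1\<^sub>m n" "\<And>s. 0 \<le> s \<Longrightarrow> M s * A = M (s + 1)"
  shows "A ^\<^sub>m m = M (int m)"
  by (induction m) (use assms in \<open>auto simp: add.commute\<close>)

lemma pow_mat_right_inverse_eq_of_mult_shift:
  fixes A B :: "'a :: semiring_1 mat" and M :: "int \<Rightarrow> 'a mat"
  assumes A: "A \<in> carrier_mat n n" and B: "B \<in> carrier_mat n n" and AB: "A * B = 1\<^sub>m n"
    and M0: "M 0 = 1\<^sub>m n" and M: "\<And>s. M s \<in> carrier_mat n n"
    and shift: "\<And>s. M s * A = M (s + 1)"
  shows "B ^\<^sub>m m = M (- int m)"
proof (induction m)
  case 0
  show ?case using B M0 by simp
next
  case (Suc m)
  have "B ^\<^sub>m Suc m = (M (- int (Suc m)) * A) * B"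
    using Suc shift[of "- int (Suc m)"] by simp
  also have "\<dots> = M (- int (Suc m)) * (A * B)"
    using A B M by (intro assoc_mult_mat) auto
  finally show ?case
    using AB by (simp add: right_mult_one_mat[OF M])
qed

lemma inv_mat_inverse:
  fixes A :: "complex mat"
  assumes "invertible_mat A" "A \<in> carrier_mat n n"
  shows "inv_mat A \<in> carrier_mat n n" "A * inv_mat A = 1\<^sub>m n" "inv_mat A * A = 1\<^sub>m n"
proof -
  have "inverts_mat A (inv_mat A) \<and> inverts_mat (inv_mat A) A"
    using assms(1) unfolding inv_mat_def invertible_mat_def by (metis (mono_tags) someI)
  then have AB: "A * inv_mat A = 1\<^sub>m n" and BA: "inv_mat A * A = 1\<^sub>m (dim_row (inv_mat A))"
    using assms(2) by (auto simp: inverts_mat_def)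
  have "dim_col (inv_mat A) = n" "dim_row (inv_mat A) = n"
    using arg_cong[OF AB, of dim_col] arg_cong[OF BA, of dim_col] assms(2) by auto
  then show "inv_mat A \<in> carrier_mat n n" "A * inv_mat A = 1\<^sub>m n" "inv_mat A * A = 1\<^sub>m n"
    using AB BA by auto
qed

lemma invertible_mat_mult_vec_eq_0:
  fixes A :: "complex mat"
  assumes "invertible_mat A" "A \<in> carrier_mat n n" "v \<in> carrier_vec n" "A *\<^sub>v v = 0\<^sub>v n"
  shows "v = 0\<^sub>v n"
proof -
  have "v = (inv_mat A * A) *\<^sub>v v"
    using inv_mat_inverse[OF assms(1,2)] assms(3) by simp
  also have "\<dots> = inv_mat A *\<^sub>v 0\<^sub>v n"
    using inv_mat_inverse(1)[OF assms(1,2)] assms by (subst assoc_mult_mat_vec[of _ n n _ n]) auto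
  also have "\<dots> = 0\<^sub>v n"
    using inv_mat_inverse(1)[OF assms(1,2)] by (intro eq_vecI) auto
  finally show ?thesis .
qed

section \<open>Spectral decomposition of \<open>A\<^sup>\<dagger>\<close>\<close>

definition dag_angle :: "nat \<Rightarrow> nat \<Rightarrow> real" where
  "dag_angle n k = real k * pi / real (n + 1)"

text \<open>Indices are 0-based: \<open>dag_eigvec n a b k i\<close> is the paper's \<open>r\<^sub>i U\<^sub>i(\<psi>\<^sub>k/2)\<close>, the
  \<open>(i+1)\<close>-th component of the \<open>k\<close>-th eigenvector.\<close>

definition dag_eigvec :: "nat \<Rightarrow> complex \<Rightarrow> complex \<Rightarrow> nat \<Rightarrow> nat \<Rightarrow> complex" where
  "dag_eigvec n a b k i = rsign i * chebU i (psi n a b k / 2)"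

definition dag_spectral_pow :: "nat \<Rightarrow> complex \<Rightarrow> complex \<Rightarrow> int \<Rightarrow> complex mat" where
  "dag_spectral_pow n a b s = mat n n (\<lambda>(i, j). \<Sum>k = 1..n.
     lam_dag n a b k powi s * eta n a b k * dag_eigvec n a b k i * dag_eigvec n a b k j)"

lemma sin_dag_angle_pos:
  assumes "k \<in> {1..n}"
  shows "sin (dag_angle n k) > 0"
proof (rule sin_gt_zero)
  have "real k * pi < (real n + 1) * pi"
    using assms by (intro mult_strict_right_mono) auto
  then show "dag_angle n k < pi"
    by (simp add: dag_angle_def field_simps)
qed (use assms in \<open>simp add: dag_angle_def\<close>)

lemma psi_eq_cos: "b \<noteq> 0 \<Longrightarrow> psi n a b k = - 2 * complex_of_real (cos (dag_angle n k))"
  by (simp add: psi_def lam_dag_def dag_angle_def)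

lemma lam_dag_eq_psi: "b \<noteq> 0 \<Longrightarrow> lam_dag n a b k = a + b * psi n a b k"
  by (simp add: psi_def)

lemma eta_eq_sin:
  assumes "b \<noteq> 0"
  shows "eta n a b k = 2 / (of_nat n + 1) * complex_of_real (sin (dag_angle n k)) ^ 2"
proof -
  have "complex_of_real (cos (dag_angle n k)) ^ 2 = 1 - complex_of_real (sin (dag_angle n k)) ^ 2"
    using arg_cong[OF cos_squared_eq[of "dag_angle n k"], of complex_of_real] by simp
  then have numerator: "4 - psi n a b k ^ 2 = 4 * complex_of_real (sin (dag_angle n k)) ^ 2"
    using assms by (simp add: psi_eq_cos power_mult_distrib)
  have denominator: "2 * of_nat n + 2 = 2 * (of_nat n + 1 :: complex)"
    by simp
  have "4 * z / (2 * w) = 2 / w * z" for z w :: complex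
    by (cases "w = 0") (simp_all add: field_simps)
  then show ?thesis
    unfolding eta_def numerator denominator .
qed

lemma dag_eigvec_mult_sin:
  assumes "b \<noteq> 0"
  shows "dag_eigvec n a b k i * complex_of_real (sin (dag_angle n k))
    = rsign i * (-1) ^ i * complex_of_real (sin (real (Suc i) * dag_angle n k))"
  using assms by (simp add: dag_eigvec_def psi_eq_cos chebU_uminus chebU_cos_mult_sin flip: mult.assoc)

text \<open>The eigenvalue equation in the last row of \<open>A\<^sup>\<dagger>\<close> needs this component beyond the matrix
  to vanish.\<close>

lemma dag_eigvec_at_dim:
  assumes "b \<noteq> 0" "k \<in> {1..n}"
  shows "dag_eigvec n a b k n = 0"
proof -
  have "real (Suc n) * dag_angle n k = real k * pi"
    by (simp add: dag_angle_def)
  then have "dag_eigvec n a b k n * complex_of_real (sin (dag_angle n k)) = 0"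
    using assms(1) by (simp add: dag_eigvec_mult_sin)
  then show ?thesis
    using sin_dag_angle_pos[OF assms(2)] by simp
qed

lemma dim_Adag [simp]: "dim_row (Adag n a b) = n" "dim_col (Adag n a b) = n"
  by (simp_all add: Adag_def)

lemma Adag_carrier: "Adag n a b \<in> carrier_mat n n"
  by (simp add: Adag_def)

lemma Adag_column_sum:
  assumes "j < n"
  shows "(\<Sum>l = 0..<n. f l * Adag n a b $$ (l, j)) = a * f j
    + (if Suc j < n then (-1) ^ j * b * f (Suc j) else 0)
    + (if j = 0 then 0 else (-1) ^ (j - 1) * b * f (j - 1))"
proof -
  have "(\<Sum>l = 0..<n. f l * Adag n a b $$ (l, j)) = (\<Sum>l = 0..<n.
      (if l = j then a * f l else 0) + (if l = Suc j then (-1) ^ j * b * f l else 0)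
      + (if Suc l = j then (-1) ^ l * b * f l else 0))"
    using assms by (intro sum.cong) (auto simp: Adag_def)
  also have "\<dots> = a * f j + (if Suc j < n then (-1) ^ j * b * f (Suc j) else 0)
      + (\<Sum>l = 0..<n. if Suc l = j then (-1) ^ l * b * f l else 0)"
    using assms by (simp add: sum.distrib)
  also have "(\<Sum>l = 0..<n. if Suc l = j then (-1) ^ l * b * f l else 0)
      = (if j = 0 then 0 else (-1) ^ (j - 1) * b * f (j - 1))"
    using assms by (cases j) (auto simp: sum.delta)
  finally show ?thesis .
qed

lemma dag_eigvec_mult_Adag:
  assumes "b \<noteq> 0" "k \<in> {1..n}" "j < n"
  shows "(\<Sum>l = 0..<n. dag_eigvec n a b k l * Adag n a b $$ (l, j)) = lam_dag n a b k * dag_eigvec n a b k j"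
proof -
  let ?v = "dag_eigvec n a b k"
  have last: "(if Suc j < n then (-1) ^ j * b * ?v (Suc j) else 0) = (-1) ^ j * b * ?v (Suc j)"
    using dag_eigvec_at_dim[OF assms(1,2), of a] assms(3) by (cases "Suc j = n") auto
  have recurrence: "(-1) ^ j * ?v (Suc j) + (if j = 0 then 0 else (-1) ^ (j - 1) * ?v (j - 1))
      = 2 * (psi n a b k / 2) * ?v j"
    unfolding dag_eigvec_def by (rule rsign_chebU_recurrence)
  have "(-1) ^ j * b * ?v (Suc j) + (if j = 0 then 0 else (-1) ^ (j - 1) * b * ?v (j - 1))
      = b * (2 * (psi n a b k / 2) * ?v j)"
    unfolding recurrence[symmetric] by (cases "j = 0") (simp_all add: algebra_simps)
  then show ?thesis
    using assms by (simp add: Adag_column_sum last lam_dag_eq_psi algebra_simps)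
qed

lemma dag_eigvec_orthonormal:
  assumes "b \<noteq> 0" "i < n" "j < n"
  shows "(\<Sum>k = 1..n. eta n a b k * dag_eigvec n a b k i * dag_eigvec n a b k j) = (if i = j then 1 else 0)"
proof -
  define c where "c l = rsign l * (-1) ^ l" for l
  have summand: "eta n a b k * dag_eigvec n a b k i * dag_eigvec n a b k j = 2 / (of_nat n + 1) * c i * c j
      * complex_of_real (sin (real (Suc i) * dag_angle n k) * sin (real (Suc j) * dag_angle n k))" for k
    using dag_eigvec_mult_sin[OF assms(1), of n a k i] dag_eigvec_mult_sin[OF assms(1), of n a k j]
    by (simp add: eta_eq_sin[OF assms(1)] c_def power2_eq_square algebra_simps)
  have "(\<Sum>k = 1..n. eta n a b k * dag_eigvec n a b k i * dag_eigvec n a b k j)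
      = 2 / (of_nat n + 1) * c i * c j * complex_of_real
          (\<Sum>k = 1..n. sin (real (Suc i) * dag_angle n k) * sin (real (Suc j) * dag_angle n k))"
    by (simp only: summand of_real_sum sum_distrib_left)
  also have "(\<Sum>k = 1..n. sin (real (Suc i) * dag_angle n k) * sin (real (Suc j) * dag_angle n k))
      = (if i = j then (real n + 1) / 2 else 0)"
    unfolding dag_angle_def using assms by (subst sum_sin_mult_sin_equidistant) auto
  also have "2 / (of_nat n + 1) * c i * c j * complex_of_real (if i = j then (real n + 1) / 2 else 0)
      = (if i = j then 1 else 0)"
  proof (cases "i = j")
    case True
    have "c i * c i = 1"
      by (simp add: c_def rsign_mult_self algebra_simps flip: power_add)
    moreover have "(of_nat n + 1 :: complex) \<noteq> 0"
      by (metis of_nat_Suc of_nat_eq_0_iff add.commute nat.distinct(1))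
    moreover have "complex_of_real ((real n + 1) / 2) = (of_nat n + 1) / 2"
      by simp
    ultimately show ?thesis
      using True by (simp add: mult.commute[of _ "c i"] mult.left_commute[of _ "c i"] flip: mult.assoc)
  qed simp
  finally show ?thesis .
qed

lemma dag_spectral_pow_carrier: "dag_spectral_pow n a b s \<in> carrier_mat n n"
  by (simp add: dag_spectral_pow_def)

lemma dag_spectral_pow_0:
  assumes "b \<noteq> 0"
  shows "dag_spectral_pow n a b 0 = 1\<^sub>m n"
proof (rule eq_matI)
  fix i j
  assume "i < dim_row (1\<^sub>m n :: complex mat)" "j < dim_col (1\<^sub>m n :: complex mat)"
  then have ij: "i < n" "j < n"
    by simp_all
  then show "dag_spectral_pow n a b 0 $$ (i, j) = 1\<^sub>m n $$ (i, j)"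
    using dag_eigvec_orthonormal[OF assms ij] by (simp add: dag_spectral_pow_def)
qed (simp_all add: dag_spectral_pow_def)

lemma dag_spectral_pow_mult_Adag:
  assumes "b \<noteq> 0" and powi_step: "0 \<le> s \<or> (\<forall>k \<in> {1..n}. lam_dag n a b k \<noteq> 0)"
  shows "dag_spectral_pow n a b s * Adag n a b = dag_spectral_pow n a b (s + 1)"
proof (rule eq_matI)
  fix i j
  assume "i < dim_row (dag_spectral_pow n a b (s + 1))" "j < dim_col (dag_spectral_pow n a b (s + 1))"
  then have ij: "i < n" "j < n"
    by (auto simp: dag_spectral_pow_def)
  let ?v = "dag_eigvec n a b" and ?lam = "lam_dag n a b" and ?A = "Adag n a b"
  define c where "c k = ?lam k powi s * eta n a b k * ?v k i" for k
  have "(dag_spectral_pow n a b s * ?A) $$ (i, j) = (\<Sum>l = 0..<n. (\<Sum>k = 1..n. c k * ?v k l) * ?A $$ (l, j))"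
    using ij by (simp add: dag_spectral_pow_def scalar_prod_def c_def)
  also have "\<dots> = (\<Sum>l = 0..<n. \<Sum>k = 1..n. c k * (?v k l * ?A $$ (l, j)))"
    by (simp add: sum_distrib_right mult.assoc)
  also have "\<dots> = (\<Sum>k = 1..n. \<Sum>l = 0..<n. c k * (?v k l * ?A $$ (l, j)))"
    by (rule sum.swap)
  also have "\<dots> = (\<Sum>k = 1..n. c k * (\<Sum>l = 0..<n. ?v k l * ?A $$ (l, j)))"
    by (simp add: sum_distrib_left)
  also have "\<dots> = (\<Sum>k = 1..n. c k * ?lam k * ?v k j)"
    using assms(1) ij by (simp add: dag_eigvec_mult_Adag mult.assoc)
  also have "\<dots> = (\<Sum>k = 1..n. ?lam k powi (s + 1) * eta n a b k * ?v k i * ?v k j)"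
    using powi_step by (intro sum.cong) (auto simp: c_def power_int_add_1 mult_ac)
  also have "\<dots> = dag_spectral_pow n a b (s + 1) $$ (i, j)"
    using ij by (simp add: dag_spectral_pow_def)
  finally show "(dag_spectral_pow n a b s * ?A) $$ (i, j) = dag_spectral_pow n a b (s + 1) $$ (i, j)" .
qed (simp_all add: dag_spectral_pow_def)

lemma lam_dag_nonzero_if_invertible:
  assumes "b \<noteq> 0" "invertible_mat (Adag n a b)" "k \<in> {1..n}"
  shows "lam_dag n a b k \<noteq> 0"
proof
  assume zero: "lam_dag n a b k = 0"
  define v where "v = vec n (dag_eigvec n a b k)"
  have "Adag n a b *\<^sub>v v = 0\<^sub>v n"
  proof (rule eq_vecI)
    fix i
    assume "i < dim_vec (0\<^sub>v n :: complex vec)"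
    then have i: "i < n"
      by simp
    then have "(Adag n a b *\<^sub>v v) $ i = (\<Sum>l = 0..<n. dag_eigvec n a b k l * Adag n a b $$ (l, i))"
      by (auto simp: v_def scalar_prod_def Adag_def mult.commute intro!: sum.cong)
    then show "(Adag n a b *\<^sub>v v) $ i = 0\<^sub>v n $ i"
      using i zero dag_eigvec_mult_Adag[OF assms(1,3) i] by simp
  qed (simp add: Adag_def)
  then have "v = 0\<^sub>v n"
    using invertible_mat_mult_vec_eq_0[OF assms(2) Adag_carrier] by (simp add: v_def)
  moreover have "v $ 0 = 1"
    using assms(3) by (simp add: v_def dag_eigvec_def rsign_def)
  ultimately show False
    using assms(3) by simp
qed

lemma mat_pow_int_Adag_eq_spectral:
  assumes "b \<noteq> 0" "0 \<le> s \<or> invertible_mat (Adag n a b)"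
  shows "mat_pow_int (Adag n a b) s = dag_spectral_pow n a b s"
proof (cases "0 \<le> s")
  case True
  have "Adag n a b ^\<^sub>m nat s = dag_spectral_pow n a b (int (nat s))"
    by (rule pow_mat_eq_of_mult_shift[where M = "dag_spectral_pow n a b", OF Adag_carrier
          dag_spectral_pow_0[OF assms(1)] dag_spectral_pow_mult_Adag[OF assms(1)]]) simp
  with True show ?thesis
    by (simp add: mat_pow_int_def)
next
  case False
  then have inv: "invertible_mat (Adag n a b)"
    using assms(2) by simp
  have shift: "dag_spectral_pow n a b t * Adag n a b = dag_spectral_pow n a b (t + 1)" for t
    using dag_spectral_pow_mult_Adag[OF assms(1)] lam_dag_nonzero_if_invertible[OF assms(1) inv]
    by blast
  have "inv_mat (Adag n a b) ^\<^sub>m nat (- s) = dag_spectral_pow n a b (- int (nat (- s)))"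
    using inv_mat_inverse[OF inv Adag_carrier]
    by (intro pow_mat_right_inverse_eq_of_mult_shift[where M = "dag_spectral_pow n a b", OF Adag_carrier
          _ _ dag_spectral_pow_0[OF assms(1)] dag_spectral_pow_carrier shift])
  with False show ?thesis
    by (simp add: mat_pow_int_def)
qed

theorem mainTheorem4:
  fixes p n :: nat and a b :: complex and s :: int and i j :: nat
  assumes "p > 0" and "n = 2 * p" and "b \<noteq> 0"
    and "0 \<le> s \<or> invertible_mat (Adag n a b)"
    and "i \<in> {1..n}" and "j \<in> {1..n}"
  shows "mat_pow_int (Adag n a b) s $$ (i - 1, j - 1) =
    (\<Sum>k = 1..n. (lam_dag n a b k) powi s * eta n a b k
        * rsign (i - 1) * rsign (j - 1)
        * chebU (i - 1) (psi n a b k / 2) * chebU (j - 1) (psi n a b k / 2))"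
proof -
  have "i - 1 < n" "j - 1 < n"
    using assms(5,6) by auto
  then have "dag_spectral_pow n a b s $$ (i - 1, j - 1) = (\<Sum>k = 1..n.
      lam_dag n a b k powi s * eta n a b k * dag_eigvec n a b k (i - 1) * dag_eigvec n a b k (j - 1))"
    by (simp add: dag_spectral_pow_def)
  then show ?thesis
    by (simp add: mat_pow_int_Adag_eq_spectral[OF assms(3,4)] dag_eigvec_def mult_ac)
qed

end
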